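(* Let $b\ge2$ and $N\ge2$ be integers with $N$ even, let $c_j$ ($j\in\mathbb{Z}$) be given reals, let $\beta\ge0$ be an integer, and let $j\ge0$ be an index and $\Delta$ a real number. Run the following procedure (the update of an \textsc{Ola} buffer): start with a map $deltas$ (default value $0$) containing the single key $j$ with $deltas_j=\Delta$. For $s=0,1,\ldots,\beta$: let $K$ be the set of keys of $deltas$ at the start of this iteration; for each $i\in K$ such that $\lfloor i/b^s\rfloor$ is not divisible by $b$, set $\delta=deltas_i$, then for each $m=-\frac N2+1,\ldots,\frac N2$ add $c_{-bm+(\lfloor i/b^s\rfloor \bmod b)}\,\delta$ to $deltas_{(\lfloor i/b^{s+1}\rfloor+m)b^{s+1}}$, then (after possibly adding $deltas_i$ to the buffer entry $B_{i/b}$ when $b\mid i$) remove key $i$ from $deltas$. Then at the start and at the end of every iteration $s$, the map $deltas$ has at most $2N$ keys; that is, the changes are propagated from each scale to the next over at most $2N$ cells (the update dag has at most $2N$ nodes at each level).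
   Context: The \textsc{Ola} buffer is a hierarchical overlapped bin buffer over an external array, with bin size $b$, $N$ buffered moments and Lagrange coefficients $c_j$ of degree $N-1$; cells whose index is divisible by $b^{s-1}$ are said to belong to scale $s$ (scale $0$ being the external array), and higher-scale values are stored in place. The procedure above propagates the effect of changing the external-array entry $a_j$ by $\Delta$ through the scales. *)

theory Defs
  imports Complex_Main
begin

text \<open>State of the map deltas: its set of keys together with its values
  (default value 0 for absent keys).\<close>
type_synonym ola_map = "int set \<times> (int \<Rightarrow> real)"

definition ola_add :: "int \<Rightarrow> real \<Rightarrow> ola_map \<Rightarrow> ola_map" where
  "ola_add t v st = (insert t (fst st), (snd st)(t := snd st t + v))"

definition ola_process :: "int \<Rightarrow> int \<Rightarrow> (int \<Rightarrow> real) \<Rightarrow> nat \<Rightarrow> int \<Rightarrow> ola_map \<Rightarrow> ola_map" where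
  "ola_process b N c s i st =
     (if \<not> b dvd (i div b ^ s) then
        (let \<delta> = snd st i;
             st' = fold (\<lambda>m acc. ola_add ((i div b ^ (s + 1) + m) * b ^ (s + 1))
                                        (c (- b * m + (i div b ^ s) mod b) * \<delta>) acc)
                        [- (N div 2) + 1 .. N div 2] st
         in (fst st' - {i}, (snd st')(i := 0)))
      else st)"

definition ola_iter :: "int \<Rightarrow> int \<Rightarrow> (int \<Rightarrow> real) \<Rightarrow> nat \<Rightarrow> ola_map \<Rightarrow> ola_map" where
  "ola_iter b N c s st = fold (ola_process b N c s) (sorted_list_of_set (fst st)) st"

text \<open>State of deltas at the start of iteration s (= end of iteration s-1).\<close>
fun ola_state :: "int \<Rightarrow> int \<Rightarrow> (int \<Rightarrow> real) \<Rightarrow> int \<Rightarrow> real \<Rightarrow> nat \<Rightarrow> ola_map" where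
  "ola_state b N c j \<Delta> 0 = ({j}, (\<lambda>_. 0)(j := \<Delta>))"
| "ola_state b N c j \<Delta> (Suc s) = ola_iter b N c s (ola_state b N c j \<Delta> s)"

end

theory Submission
  imports Defs
begin

text \<open>At the start of iteration \<open>s\<close> all keys lie in a window of \<open>2 N\<close> consecutive
  multiples \<open>k b ^ s\<close>. A key whose \<open>k\<close> is divisible by \<open>b\<close> survives the iteration and is
  already a multiple of \<open>b ^ (s + 1)\<close>; every other key is removed and replaced by the
  multiples \<open>(k div b + m) b ^ (s + 1)\<close> with \<open>-N/2 < m \<le> N/2\<close>. As \<open>k div b\<close> takes at most
  \<open>N + 1\<close> consecutive values and \<open>m\<close> takes \<open>N\<close>, the keys after the iteration again lie in a
  window of \<open>2 N\<close> consecutive multiples of \<open>b ^ (s + 1)\<close>.\<close>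

definition ola_targets :: "int \<Rightarrow> int \<Rightarrow> nat \<Rightarrow> int \<Rightarrow> int set" where
  "ola_targets b N s i = (\<lambda>m. (i div b ^ (s + 1) + m) * b ^ (s + 1)) ` {- (N div 2) + 1 .. N div 2}"

definition scale_window :: "int \<Rightarrow> nat \<Rightarrow> int \<Rightarrow> int \<Rightarrow> int set" where
  "scale_window b s L w = (\<lambda>k. k * b ^ s) ` {L..<L + w}"

lemma keys_fold_ola_add:
  "fst (fold (\<lambda>m acc. ola_add (f m) (v m) acc) ms st) = fst st \<union> f ` set ms"
  by (induction ms arbitrary: st) (auto simp: ola_add_def)

lemma keys_ola_process:
  "fst (ola_process b N c s i st) =
     (if b dvd (i div b ^ s) then fst st else (fst st \<union> ola_targets b N s i) - {i})"
  by (simp add: ola_process_def Let_def keys_fold_ola_add ola_targets_def)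

lemma keys_fold_ola_process_subset:
  assumes "fst st \<subseteq> A \<union> set xs"
    and "\<And>i. i \<in> set xs \<Longrightarrow> if b dvd (i div b ^ s) then i \<in> A else ola_targets b N s i \<subseteq> A"
  shows "fst (fold (ola_process b N c s) xs st) \<subseteq> A"
  using assms
proof (induction xs arbitrary: st)
  case Nil
  then show ?case by simp
next
  case (Cons i xs)
  have "if b dvd (i div b ^ s) then i \<in> A else ola_targets b N s i \<subseteq> A"
    using Cons.prems(2) by simp
  then have "fst (ola_process b N c s i st) \<subseteq> A \<union> set xs"
    using Cons.prems(1) by (auto simp: keys_ola_process split: if_splits)
  then show ?case
    using Cons.IH Cons.prems(2) by simp
qed

lemma card_scale_window: "0 \<le> w \<Longrightarrow> int (card (scale_window b s L w)) \<le> w"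
  unfolding scale_window_def using card_image_le[of "{L..<L + w}" "\<lambda>k. k * b ^ s"] by simp

lemma div_le_add_if_less:
  fixes b k L n :: int
  assumes "0 < b" "k < L + b * n"
  shows "k div b \<le> L div b + n"
proof -
  have "k div b \<le> (L + b * n) div b"
    using assms by (intro zdiv_mono1) auto
  also have "\<dots> = L div b + n"
    using assms(1) by simp
  finally show ?thesis .
qed

lemma scale_window_step:
  fixes b N L :: int
  assumes b: "b \<ge> 2" and N: "N \<ge> 2" "even N"
    and i: "i \<in> scale_window b s L (2 * N)"
  defines "W' \<equiv> scale_window b (Suc s) (L div b - N div 2 + 1) (2 * N)"
  shows "if b dvd (i div b ^ s) then i \<in> W' else ola_targets b N s i \<subseteq> W'"
proof -
  obtain k where "k \<in> {L..<L + 2 * N}" "i = k * b ^ s"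
    using i unfolding scale_window_def by (rule imageE)
  then have k: "i = k * b ^ s" "L \<le> k" "k < L + 2 * N"
    by simp_all
  have "0 < b ^ s"
    using b by simp
  then have i_div: "i div b ^ s = k" "i div b ^ (s + 1) = k div b"
    using b by (simp_all add: k(1) zdiv_zmult2_eq[symmetric] mult.commute)
  have "k < L + b * N"
    using b N k(3) mult_right_mono[of 2 b N] by linarith
  then have k_div: "L div b \<le> k div b" "k div b \<le> L div b + N"
    using b k(2) by (simp_all add: zdiv_mono1 div_le_add_if_less)
  have half: "2 * (N div 2) = N" "N div 2 \<ge> 1"
    using N by auto
  let ?L' = "L div b - N div 2 + 1"
  show ?thesis
  proof (cases "b dvd k")
    case True
    then have "i = (k div b) * b ^ Suc s"
      by (simp add: k(1) mult.assoc)
    moreover have "k div b \<in> {?L'..<?L' + 2 * N}"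
      using k_div half by simp
    ultimately have "i \<in> W'"
      unfolding W'_def scale_window_def by (rule image_eqI)
    then show ?thesis
      using True by (simp add: i_div)
  next
    case False
    have "ola_targets b N s i \<subseteq> W'"
    proof
      fix t
      assume "t \<in> ola_targets b N s i"
      then obtain m where m: "m \<in> {- (N div 2) + 1 .. N div 2}" "t = (k div b + m) * b ^ Suc s"
        unfolding ola_targets_def i_div by auto
      have "k div b + m \<in> {?L'..<?L' + 2 * N}"
        using m(1) k_div half by simp
      with m(2) show "t \<in> W'"
        unfolding W'_def scale_window_def by (rule image_eqI)
    qed
    then show ?thesis
      using False by (simp add: i_div)
  qed
qed

lemma keys_ola_iter_window:
  fixes b N L :: int
  assumes "b \<ge> 2" "N \<ge> 2" "even N"
    and "fst st \<subseteq> scale_window b s L (2 * N)"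
  shows "fst (ola_iter b N c s st) \<subseteq> scale_window b (Suc s) (L div b - N div 2 + 1) (2 * N)"
proof -
  have "finite (fst st)"
    using assms(4) finite_subset by (auto simp: scale_window_def)
  then have keys: "set (sorted_list_of_set (fst st)) = fst st"
    by simp
  show ?thesis
    unfolding ola_iter_def
  proof (rule keys_fold_ola_process_subset)
    show "fst st \<subseteq> scale_window b (Suc s) (L div b - N div 2 + 1) (2 * N) \<union>
        set (sorted_list_of_set (fst st))"
      using keys by blast
  next
    fix i
    assume "i \<in> set (sorted_list_of_set (fst st))"
    with keys assms(4) show "if b dvd (i div b ^ s)
        then i \<in> scale_window b (Suc s) (L div b - N div 2 + 1) (2 * N)
        else ola_targets b N s i \<subseteq> scale_window b (Suc s) (L div b - N div 2 + 1) (2 * N)"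
      by (intro scale_window_step assms(1-3)) auto
  qed
qed

lemma keys_ola_state_window:
  fixes b N :: int
  assumes "b \<ge> 2" "N \<ge> 2" "even N"
  shows "\<exists>L. fst (ola_state b N c j \<Delta> s) \<subseteq> scale_window b s L (2 * N)"
proof (induction s)
  case 0
  have "j \<in> {j..<j + 2 * N}"
    using assms by simp
  then have "j \<in> scale_window b 0 j (2 * N)"
    unfolding scale_window_def by (rule image_eqI[rotated]) simp
  then show ?case
    by auto
next
  case (Suc s)
  then obtain L where "fst (ola_state b N c j \<Delta> s) \<subseteq> scale_window b s L (2 * N)"
    by blast
  then have "fst (ola_state b N c j \<Delta> (Suc s))
      \<subseteq> scale_window b (Suc s) (L div b - N div 2 + 1) (2 * N)"
    unfolding ola_state.simps by (rule keys_ola_iter_window[OF assms])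
  then show ?case
    by blast
qed

theorem proposition5:
  fixes b N :: int and c :: "int \<Rightarrow> real" and \<beta> :: nat and j :: int and \<Delta> :: real
  assumes "b \<ge> 2" and "N \<ge> 2" and "even N" and "j \<ge> 0"
  shows "\<forall>s \<le> \<beta>.
           int (card (fst (ola_state b N c j \<Delta> s))) \<le> 2 * N \<and>
           int (card (fst (ola_iter b N c s (ola_state b N c j \<Delta> s)))) \<le> 2 * N"
proof -
  have bound: "int (card (fst (ola_state b N c j \<Delta> s))) \<le> 2 * N" for s
  proof -
    obtain L where "fst (ola_state b N c j \<Delta> s) \<subseteq> scale_window b s L (2 * N)"
      using keys_ola_state_window assms(1-3) by blast
    then have "card (fst (ola_state b N c j \<Delta> s)) \<le> card (scale_window b s L (2 * N))"
      by (rule card_mono[rotated]) (simp add: scale_window_def)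
    then show ?thesis
      using card_scale_window[of "2 * N" b s L] assms(2) by linarith
  qed
  show ?thesis
    using bound bound[of "Suc _"] by simp
qed

end
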